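(* Let $n\ge3$, let $B$ be the ménage board and $\alpha=(\alpha_1,\dots,\alpha_\ell)$ a valid prefix with $1\le\ell<n$. Partition $[n]\setminus\{\alpha_1,\dots,\alpha_\ell\}$ into maximal sets $P_1,\dots,P_m$ of consecutive integers. Then $B_\alpha^c$ is the union of $m$ pairwise disjoint sub-boards, where the $t$-th consists of the (relabeled) squares of $B^c$ lying in columns of $P_t$ and rows $>\ell$; each of these sub-boards is staircase-shaped with exactly $\sum_{p\in P_t}c_p$ squares. Consequently the multiset of sizes of the disjoint staircase-shaped sub-boards of $B_\alpha^c$ is $\mathcal P_\alpha=\{\sum_{p\in P_t}c_p: 1\le t\le m\}$.
   Context: Ménage board $B=\{(i,j)\in[n]\times[n]: j\ne i,\ j+1\not\equiv i\pmod n\}$, with complement $B^c=\{(i,i):i\in[n]\}\cup\{(i+1,i):i\in[n-1]\}\cup\{(1,n)\}$; squares are (row, column). Valid prefix: prefix of the one-line notation of a ménage permutation ($\pi\in S_n$ with $\pi(i)\ne i$, $\pi(i)+1\not\equiv i\pmod n$). Derived board $B_\alpha$: delete rows $1,\dots,\ell$ and columns $\alpha_1,\dots,\alpha_\ell$ of $B$, relabel the rest increasingly as $1,\dots,n-\ell$; $B_\alpha^c$ = complement of $B_\alpha$ in $[n-\ell]\times[n-\ell]$ (equivalently the image of $B^c$ under the same deletion and relabeling). For $i\notin\alpha$: $c_i=0$ if $i<\ell$, $c_i=1$ if $i=\ell$ or $i=n$, $c_i=2$ if $\ell<i<n$. Disjoint sub-boards: no square of one shares a row or column with a square of another. Staircase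 shapes for $m\ge1$: $\mathcal O_{2m-1}=\{(i,i):i\in[m]\}\cup\{(i,i+1):i\in[m-1]\}$, $\mathcal O_{2m-1}^\intercal=\{(i,i):i\in[m]\}\cup\{(i+1,i):i\in[m-1]\}$, $\mathcal E_{2m-2}=\{(i,i):i\in[m-1]\}\cup\{(i+1,i):i\in[m-1]\}$, $\mathcal E_{2m-2}^\intercal=\{(i,i):i\in[m-1]\}\cup\{(i,i+1):i\in[m-1]\}$; a board is staircase-shaped if, after relabeling its occupied rows and columns increasingly as $1,2,\dots$, it equals one of these (empty board = $\mathcal E_0$). *)

theory Defs
  imports "HOL-Combinatorics.Permutations" "HOL-Library.Multiset"
begin

type_synonym board = "(nat \<times> nat) set"

text \<open>Menage board on [n] x [n]; squares are (row, column).\<close>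
definition menage_board :: "nat \<Rightarrow> board" where
  "menage_board n = {(i, j). i \<in> {1..n} \<and> j \<in> {1..n} \<and> j \<noteq> i \<and> (j + 1) mod n \<noteq> i mod n}"

definition menage_board_compl :: "nat \<Rightarrow> board" where
  "menage_board_compl n = ({1..n} \<times> {1..n}) - menage_board n"

definition menage_perm :: "nat \<Rightarrow> (nat \<Rightarrow> nat) \<Rightarrow> bool" where
  "menage_perm n \<pi> \<longleftrightarrow> \<pi> permutes {1..n} \<and>
     (\<forall>i\<in>{1..n}. \<pi> i \<noteq> i \<and> (\<pi> i + 1) mod n \<noteq> i mod n)"

definition valid_prefix :: "nat \<Rightarrow> nat list \<Rightarrow> bool" where
  "valid_prefix n \<alpha> \<longleftrightarrow> (\<exists>\<pi>. menage_perm n \<pi> \<and> \<alpha> = map \<pi> [1..<length \<alpha> + 1])"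

text \<open>Relabeling after deleting rows 1..l and the columns in alpha.\<close>
definition relabel :: "nat list \<Rightarrow> nat \<times> nat \<Rightarrow> nat \<times> nat" where
  "relabel \<alpha> sq = (fst sq - length \<alpha>, snd sq - card {a \<in> set \<alpha>. a < snd sq})"

definition derived_board :: "nat \<Rightarrow> nat list \<Rightarrow> board" where
  "derived_board n \<alpha> = relabel \<alpha> ` {(i, j) \<in> menage_board n. i > length \<alpha> \<and> j \<notin> set \<alpha>}"

definition derived_board_compl :: "nat \<Rightarrow> nat list \<Rightarrow> board" where
  "derived_board_compl n \<alpha> =
     ({1..n - length \<alpha>} \<times> {1..n - length \<alpha>}) - derived_board n \<alpha>"

definition cval :: "nat \<Rightarrow> nat \<Rightarrow> nat \<Rightarrow> nat" where
  "cval n l i = (if i < l then 0 else if i = l \<or> i = n then 1 else 2)"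

definition runs :: "nat \<Rightarrow> nat list \<Rightarrow> nat set set" where
  "runs n \<alpha> = {{a..b} | a b. 1 \<le> a \<and> a \<le> b \<and> b \<le> n \<and> {a..b} \<inter> set \<alpha> = {}
       \<and> (a = 1 \<or> a - 1 \<in> set \<alpha>) \<and> (b = n \<or> b + 1 \<in> set \<alpha>)}"

definition sub_board :: "nat \<Rightarrow> nat list \<Rightarrow> nat set \<Rightarrow> board" where
  "sub_board n \<alpha> P = relabel \<alpha> ` {(i, j) \<in> menage_board_compl n. i > length \<alpha> \<and> j \<in> P}"

definition disjoint_boards :: "board \<Rightarrow> board \<Rightarrow> bool" where
  "disjoint_boards X Y \<longleftrightarrow> (\<forall>s\<in>X. \<forall>t\<in>Y. fst s \<noteq> fst t \<and> snd s \<noteq> snd t)"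

definition O_shape :: "nat \<Rightarrow> board" where
  "O_shape m = {(i, i) | i. i \<in> {1..m}} \<union> {(i, i + 1) | i. i \<in> {1..m - 1}}"
definition OT_shape :: "nat \<Rightarrow> board" where
  "OT_shape m = {(i, i) | i. i \<in> {1..m}} \<union> {(i + 1, i) | i. i \<in> {1..m - 1}}"
definition E_shape :: "nat \<Rightarrow> board" where
  "E_shape m = {(i, i) | i. i \<in> {1..m - 1}} \<union> {(i + 1, i) | i. i \<in> {1..m - 1}}"
definition ET_shape :: "nat \<Rightarrow> board" where
  "ET_shape m = {(i, i) | i. i \<in> {1..m - 1}} \<union> {(i, i + 1) | i. i \<in> {1..m - 1}}"

definition rank_in :: "nat set \<Rightarrow> nat \<Rightarrow> nat" where
  "rank_in S x = card {y \<in> S. y < x} + 1"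

definition normalize :: "board \<Rightarrow> board" where
  "normalize X = (\<lambda>(i, j). (rank_in (fst ` X) i, rank_in (snd ` X) j)) ` X"

definition staircase_shaped :: "board \<Rightarrow> bool" where
  "staircase_shaped X \<longleftrightarrow> (\<exists>m\<ge>1. normalize X = O_shape m \<or> normalize X = OT_shape m
       \<or> normalize X = E_shape m \<or> normalize X = ET_shape m)"

end

theory Submission
  imports Defs
begin

text \<open>Once rows \<open>1..\<ell>\<close> are deleted, the corner square \<open>(1, n)\<close> of \<open>B\<^sup>c\<close> is gone and what remains
  are the two diagonals \<open>i = j\<close> and \<open>i = j + 1\<close> in rows \<open>> \<ell>\<close>. Distinct maximal runs of
  remaining columns are at least two apart, so their pieces of the diagonals share no row or column;
  relabelling is strictly increasing in both coordinates, so it keeps this disjointness and the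
  normalised shape. On a run \<open>{a..b}\<close> the diagonals form a shifted staircase, of type \<open>O\<close> or
  \<open>E\<^sup>T\<close> if the run reaches column \<open>\<ell>\<close> and of type \<open>E\<close> or \<open>O\<^sup>T\<close> otherwise, depending on
  whether \<open>b < n\<close>; column \<open>p\<close> carries exactly \<open>c\<^sub>p\<close> of its squares.\<close>

lemma menage_board_compl_iff:
  "(i, j) \<in> menage_board_compl n \<longleftrightarrow>
     i \<in> {1..n} \<and> j \<in> {1..n} \<and> (i = j \<or> i = j + 1 \<or> (i = 1 \<and> j = n))"
proof -
  have "(j + 1) mod n = i mod n \<longleftrightarrow> i = j + 1 \<or> (i = 1 \<and> j = n)"
    if "i \<in> {1..n}" "j \<in> {1..n}" "i \<noteq> j"
    using that by (cases "n = 1") (auto simp: mod_if)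
  then show ?thesis unfolding menage_board_compl_def menage_board_def by auto
qed

lemma rank_in_strict_mono_image:
  assumes "strict_mono_on S f" "x \<in> S"
  shows "rank_in (f ` S) (f x) = rank_in S x"
proof -
  have "{y \<in> f ` S. y < f x} = f ` {y \<in> S. y < x}"
    using assms by (auto simp: strict_mono_on_less)
  moreover have "inj_on f {y \<in> S. y < x}"
    using strict_mono_on_imp_inj_on[OF assms(1)] by (rule inj_on_subset) auto
  ultimately show ?thesis unfolding rank_in_def by (simp add: card_image)
qed

lemma normalize_map_prod:
  assumes "strict_mono_on (fst ` X) f" "strict_mono_on (snd ` X) g"
  shows "normalize (map_prod f g ` X) = normalize X"
proof -
  have images: "fst ` map_prod f g ` X = f ` fst ` X" "snd ` map_prod f g ` X = g ` snd ` X"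
    by (force simp: image_image)+
  have ranks: "rank_in (f ` fst ` X) (f i) = rank_in (fst ` X) i"
    "rank_in (g ` snd ` X) (g j) = rank_in (snd ` X) j" if "(i, j) \<in> X" for i j
    using that by (force intro: rank_in_strict_mono_image assms)+
  show ?thesis
    unfolding normalize_def images
    by (force simp del: image_image simp: ranks image_iff)
qed

lemma normalize_eq_self:
  assumes "fst ` X = {1..p}" "snd ` X = {1..q}"
  shows "normalize X = X"
proof -
  have rank: "rank_in {1..r} x = x" if "x \<in> {1..r}" for r x
  proof -
    have "{y \<in> {1..r}. y < x} = {1..<x}" using that by auto
    then show ?thesis using that unfolding rank_in_def by simp
  qed
  have "(\<lambda>(i, j). (rank_in {1..p} i, rank_in {1..q} j)) ` X = (\<lambda>x. x) ` X"
  proof (rule image_cong[OF refl])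
    fix x assume "x \<in> X"
    then have "fst x \<in> {1..p}" "snd x \<in> {1..q}" unfolding assms[symmetric] by simp_all
    then have "rank_in {1..p} (fst x) = fst x" "rank_in {1..q} (snd x) = snd x" by (simp_all only: rank)
    then show "(case x of (i, j) \<Rightarrow> (rank_in {1..p} i, rank_in {1..q} j)) = x"
      by (simp add: split_beta)
  qed
  then show ?thesis unfolding normalize_def assms by simp
qed

lemma shift_image_eq:
  fixes s t :: nat
  shows "map_prod (\<lambda>k. k + s) (\<lambda>k. k + t) ` X = {(i, j). s \<le> i \<and> t \<le> j \<and> (i - s, j - t) \<in> X}"
proof (intro set_eqI iffI)
  fix x assume "x \<in> {(i, j). s \<le> i \<and> t \<le> j \<and> (i - s, j - t) \<in> X}"
  then obtain i j where "x = (i, j)" "s \<le> i" "t \<le> j" "(i - s, j - t) \<in> X" by auto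
  then show "x \<in> map_prod (\<lambda>k. k + s) (\<lambda>k. k + t) ` X"
    by (intro rev_image_eqI[of "(i - s, j - t)"]) simp_all
qed auto

lemma normalize_shift:
  fixes s t :: nat
  assumes "fst ` X = {1..p}" "snd ` X = {1..q}"
  shows "normalize (map_prod (\<lambda>k. k + s) (\<lambda>k. k + t) ` X) = X"
  using normalize_map_prod[of X "\<lambda>k. k + s" "\<lambda>k. k + t"] normalize_eq_self[OF assms]
  by (simp add: strict_mono_on_def)

lemma fst_snd_O_shape:
  assumes "1 \<le> m" shows "fst ` O_shape m = {1..m}" "snd ` O_shape m = {1..m}"
  using assms
  unfolding O_shape_def Setcompr_eq_image by (auto simp: image_Un image_image)+

lemma fst_snd_OT_shape:
  assumes "1 \<le> m" shows "fst ` OT_shape m = {1..m}" "snd ` OT_shape m = {1..m}"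
  using assms
  unfolding OT_shape_def Setcompr_eq_image by (auto simp: image_Un image_image)+

lemma fst_snd_E_shape:
  assumes "2 \<le> m" shows "fst ` E_shape m = {1..m}" "snd ` E_shape m = {1..m - 1}"
  using assms
  unfolding E_shape_def Setcompr_eq_image by (auto simp: image_Un image_image)+

lemma fst_snd_ET_shape:
  assumes "2 \<le> m" shows "fst ` ET_shape m = {1..m - 1}" "snd ` ET_shape m = {1..m}"
  using assms
  unfolding ET_shape_def Setcompr_eq_image by (auto simp: image_Un image_image)+

text \<open>\<open>B\<^sup>c\<close> restricted to columns \<open>P\<close> and rows \<open>> l\<close>, before relabelling; this is correct
  for \<open>l \<ge> 1\<close>, which excludes the corner square \<open>(1, n)\<close>.\<close>
definition compl_strip :: "nat \<Rightarrow> nat \<Rightarrow> nat set \<Rightarrow> board" where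
  "compl_strip n l P = {(i, j). j \<in> P \<and> l < i \<and> i \<le> n \<and> (i = j \<or> i = j + 1)}"

lemma menage_board_compl_strip:
  assumes "1 \<le> l" "P \<subseteq> {1..n}"
  shows "{(i, j) \<in> menage_board_compl n. l < i \<and> j \<in> P} = compl_strip n l P"
  using assms unfolding compl_strip_def by (auto simp: menage_board_compl_iff)

lemma compl_strip_empty: "b < l \<Longrightarrow> compl_strip n l {a..b} = {}"
  unfolding compl_strip_def by auto

lemma compl_strip_O_shape:
  assumes "1 \<le> l" "a \<le> l" "l \<le> b" "b < n"
  shows "compl_strip n l {a..b} = map_prod (\<lambda>k. k + l) (\<lambda>k. k + (l - 1)) ` O_shape (b - l + 1)"
  using assms unfolding shift_image_eq compl_strip_def O_shape_def by auto

lemma compl_strip_ET_shape: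
  assumes "1 \<le> l" "a \<le> l"
  shows "compl_strip n l {a..n} = map_prod (\<lambda>k. k + l) (\<lambda>k. k + (l - 1)) ` ET_shape (n - l + 1)"
  using assms unfolding shift_image_eq compl_strip_def ET_shape_def by auto

lemma compl_strip_E_shape:
  assumes "l < a" "a \<le> b" "b < n"
  shows "compl_strip n l {a..b} = map_prod (\<lambda>k. k + (a - 1)) (\<lambda>k. k + (a - 1)) ` E_shape (b - a + 2)"
  using assms unfolding shift_image_eq compl_strip_def E_shape_def by auto

lemma compl_strip_OT_shape:
  assumes "l < a" "a \<le> n"
  shows "compl_strip n l {a..n} = map_prod (\<lambda>k. k + (a - 1)) (\<lambda>k. k + (a - 1)) ` OT_shape (n - a + 1)"
  using assms unfolding shift_image_eq compl_strip_def OT_shape_def by auto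

lemma card_compl_strip:
  assumes "l < n" "P \<subseteq> {..n}"
  shows "card (compl_strip n l P) = (\<Sum>j\<in>P. cval n l j)"
proof -
  define rows where "rows j = {i. l < i \<and> i \<le> n \<and> (i = j \<or> i = j + 1)}" for j
  have "card (rows j) = cval n l j" if j: "j \<le> n" for j
  proof -
    consider "j < l" | "j = l" | "l < j" "j = n" | "l < j" "j < n"
      using j by linarith
    then show ?thesis
    proof cases
      case 1
      then have "rows j = {}" unfolding rows_def by auto
      then show ?thesis using 1 unfolding cval_def by simp
    next
      case 2
      then have "rows j = {j + 1}" unfolding rows_def using assms(1) by auto
      then show ?thesis using 2 unfolding cval_def by simp
    next
      case 3
      then have "rows j = {j}" unfolding rows_def by auto
      then show ?thesis using 3 unfolding cval_def by simp
    next
      case 4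
      then have "rows j = {j, j + 1}" unfolding rows_def by auto
      then show ?thesis using 4 unfolding cval_def by simp
    qed
  qed
  note card_rows = this
  have "compl_strip n l P = (\<lambda>(j, i). (i, j)) ` (SIGMA j:P. rows j)"
    unfolding compl_strip_def rows_def by auto
  then have "card (compl_strip n l P) = card (SIGMA j:P. rows j)"
    by (simp add: card_image inj_on_def)
  also have "\<dots> = (\<Sum>j\<in>P. card (rows j))"
    using assms(2) finite_subset by (intro card_SigmaI) (auto simp: rows_def)
  also have "\<dots> = (\<Sum>j\<in>P. cval n l j)"
    using assms(2) card_rows by (intro sum.cong) auto
  finally show ?thesis .
qed

definition maximal_run :: "nat \<Rightarrow> nat list \<Rightarrow> nat \<Rightarrow> nat \<Rightarrow> bool" where
  "maximal_run n \<alpha> a b \<longleftrightarrow> 1 \<le> a \<and> a \<le> b \<and> b \<le> n \<and> {a..b} \<inter> set \<alpha> = {}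
     \<and> (a = 1 \<or> a - 1 \<in> set \<alpha>) \<and> (b = n \<or> b + 1 \<in> set \<alpha>)"

lemma runs_iff: "P \<in> runs n \<alpha> \<longleftrightarrow> (\<exists>a b. P = {a..b} \<and> maximal_run n \<alpha> a b)"
  unfolding runs_def maximal_run_def by blast

lemma finite_runs: "finite (runs n \<alpha>)"
  by (rule finite_subset[of _ "Pow {1..n}"]) (auto simp: runs_def)

lemma maximal_run_subset: "maximal_run n \<alpha> a b \<Longrightarrow> {a..b} \<subseteq> {1..n} - set \<alpha>"
  unfolding maximal_run_def by auto

lemma maximal_run_through:
  assumes j: "j \<in> {1..n} - set \<alpha>"
  obtains a b where "maximal_run n \<alpha> a b" "j \<in> {a..b}"
proof -
  define below where "below = insert 0 {x \<in> set \<alpha>. x < j}"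
  define above where "above = insert (n + 1) {x \<in> set \<alpha>. j < x}"
  have fin: "finite below" "finite above" unfolding below_def above_def by auto
  have "Max below \<in> below" using fin(1) by (rule Max_in) (simp add: below_def)
  note max = this Max_ge[OF fin(1)]
  have "Min above \<in> above" using fin(2) by (rule Min_in) (simp add: above_def)
  note min = this Min_le[OF fin(2)]
  have "Max below < j" "j < Min above" "Min above \<le> n + 1"
    using max(1) min j unfolding below_def above_def by auto
  moreover have "{Max below + 1..Min above - 1} \<inter> set \<alpha> = {}"
  proof -
    have "x \<le> Max below \<or> Min above \<le> x" if "x \<in> set \<alpha>" for x
      using that j max(2) min(2) unfolding below_def above_def
      by (cases x j rule: linorder_cases) auto
    then show ?thesis by fastforce
  qed
  moreover have "Max below = 0 \<or> Max below \<in> set \<alpha>" "Min above = n + 1 \<or> Min above \<in> set \<alpha>"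
    using max(1) min(1) unfolding below_def above_def by auto
  ultimately have "maximal_run n \<alpha> (Max below + 1) (Min above - 1)"
    "j \<in> {Max below + 1..Min above - 1}"
    unfolding maximal_run_def by auto
  then show ?thesis by (rule that)
qed

lemma Union_runs: "\<Union>(runs n \<alpha>) = {1..n} - set \<alpha>"
proof
  show "\<Union>(runs n \<alpha>) \<subseteq> {1..n} - set \<alpha>"
    by (auto simp: runs_iff maximal_run_def)
  show "{1..n} - set \<alpha> \<subseteq> \<Union>(runs n \<alpha>)"
  proof
    fix j assume "j \<in> {1..n} - set \<alpha>"
    then obtain a b where "maximal_run n \<alpha> a b" "j \<in> {a..b}" by (rule maximal_run_through)
    then show "j \<in> \<Union>(runs n \<alpha>)" using runs_iff by blast
  qed
qed

lemma maximal_runs_gap: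
  assumes P: "maximal_run n \<alpha> a b" and Q: "maximal_run n \<alpha> c d"
    and "{a..b} \<noteq> {c..d}" "a \<le> c"
  shows "b + 2 \<le> c"
proof (rule ccontr)
  assume close: "\<not> b + 2 \<le> c"
  show False
  proof (cases "a = c")
    case True
    then consider "b < d" | "d < b" using assms(3) by fastforce
    then show False
    proof cases
      case 1
      then have "b + 1 \<in> set \<alpha>" "b + 1 \<in> {c..d}" using P Q True unfolding maximal_run_def by auto
      then show False using Q unfolding maximal_run_def by blast
    next
      case 2
      then have "d + 1 \<in> set \<alpha>" "d + 1 \<in> {a..b}" using P Q True unfolding maximal_run_def by auto
      then show False using P unfolding maximal_run_def by blast
    qed
  next
    case False
    then have "c - 1 \<in> set \<alpha>" "c - 1 \<in> {a..b}"
      using assms close unfolding maximal_run_def by auto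
    then show False using P unfolding maximal_run_def by blast
  qed
qed

definition col_rank :: "nat list \<Rightarrow> nat \<Rightarrow> nat" where
  "col_rank \<alpha> j = j - card {a \<in> set \<alpha>. a < j}"

lemma relabel_eq_map_prod: "relabel \<alpha> = map_prod (\<lambda>i. i - length \<alpha>) (col_rank \<alpha>)"
proof
  fix sq :: "nat \<times> nat"
  show "relabel \<alpha> sq = map_prod (\<lambda>i. i - length \<alpha>) (col_rank \<alpha>) sq"
    by (cases sq) (simp add: relabel_def col_rank_def)
qed

lemma col_rank_eq_card:
  fixes \<alpha> :: "nat list"
  assumes "0 \<notin> set \<alpha>" "j \<notin> set \<alpha>"
  shows "col_rank \<alpha> j = card ({1..j} - set \<alpha>)"
proof -
  have "x \<noteq> 0" "x \<noteq> j" if "x \<in> set \<alpha>" for x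
    using assms that by metis+
  then have "{1..j} \<inter> set \<alpha> = {a \<in> set \<alpha>. a < j}"
    by (fastforce simp: le_less)
  then show ?thesis unfolding col_rank_def by (simp add: card_Diff_subset_Int)
qed

lemma col_rank_strict_mono:
  fixes \<alpha> :: "nat list"
  assumes "0 \<notin> set \<alpha>"
  shows "strict_mono_on (- set \<alpha>) (col_rank \<alpha>)"
proof (rule strict_mono_onI)
  fix j j' assume j: "j \<in> - set \<alpha>" and j': "j' \<in> - set \<alpha>" and "j < j'"
  then have "{1..j} - set \<alpha> \<subseteq> {1..j'} - set \<alpha> - {j'}" by auto
  then have "card ({1..j} - set \<alpha>) \<le> card ({1..j'} - set \<alpha> - {j'})" by (intro card_mono) auto
  also have "\<dots> < card ({1..j'} - set \<alpha>)" using j' \<open>j < j'\<close> by (intro card_Diff1_less) auto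
  finally have "card ({1..j} - set \<alpha>) < card ({1..j'} - set \<alpha>)" .
  then show "col_rank \<alpha> j < col_rank \<alpha> j'"
    using col_rank_eq_card[OF assms ComplD[OF j]] col_rank_eq_card[OF assms ComplD[OF j']]
    by linarith
qed

lemma valid_prefix_distinct_subset:
  assumes "valid_prefix n \<alpha>" "length \<alpha> \<le> n"
  shows "distinct \<alpha>" "set \<alpha> \<subseteq> {1..n}"
proof -
  obtain \<pi> where \<pi>: "menage_perm n \<pi>" "\<alpha> = map \<pi> [1..<length \<alpha> + 1]"
    using assms(1) unfolding valid_prefix_def by blast
  have perm: "\<pi> permutes {1..n}" using \<pi>(1) unfolding menage_perm_def by blast
  have "inj_on \<pi> {1..<length \<alpha> + 1}" using permutes_inj[OF perm] by (rule inj_on_subset) simp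
  then show "distinct \<alpha>" by (subst \<pi>(2)) (simp only: distinct_map distinct_upt set_upt simp_thms)
  have "set \<alpha> = \<pi> ` {1..<length \<alpha> + 1}"
    using arg_cong[OF \<pi>(2), of set] by (simp only: set_map set_upt)
  then show "set \<alpha> \<subseteq> {1..n}" using permutes_in_image[OF perm] assms(2) by auto
qed

lemma disjoint_boards_commute: "disjoint_boards X Y \<longleftrightarrow> disjoint_boards Y X"
  unfolding disjoint_boards_def by metis

locale prefix_deletion =
  fixes n :: nat and \<alpha> :: "nat list"
  assumes distinct_prefix: "distinct \<alpha>"
    and prefix_in_range: "set \<alpha> \<subseteq> {1..n}"
    and prefix_length: "1 \<le> length \<alpha>" "length \<alpha> < n"
begin

lemma zero_notin_prefix: "0 \<notin> set \<alpha>"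
  using prefix_in_range by auto

lemma card_remaining_columns: "card ({1..n} - set \<alpha>) = n - length \<alpha>"
  using card_Diff_subset[OF _ prefix_in_range] distinct_card[OF distinct_prefix] by simp

lemma col_rank_bij: "bij_betw (col_rank \<alpha>) ({1..n} - set \<alpha>) {1..n - length \<alpha>}"
proof -
  have inj: "inj_on (col_rank \<alpha>) ({1..n} - set \<alpha>)"
    using strict_mono_on_imp_inj_on[OF col_rank_strict_mono[OF zero_notin_prefix]]
    by (rule inj_on_subset) auto
  have "col_rank \<alpha> j \<in> {1..n - length \<alpha>}" if j: "j \<in> {1..n} - set \<alpha>" for j
  proof -
    have "j \<in> {1..j} - set \<alpha>" "{1..j} - set \<alpha> \<subseteq> {1..n} - set \<alpha>" using j by auto
    then have "0 < card ({1..j} - set \<alpha>)" "card ({1..j} - set \<alpha>) \<le> n - length \<alpha>"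
      using card_remaining_columns card_mono[of "{1..n} - set \<alpha>"] by (auto simp: card_gt_0_iff)
    then show ?thesis using j zero_notin_prefix by (simp add: col_rank_eq_card)
  qed
  then have "col_rank \<alpha> ` ({1..n} - set \<alpha>) = {1..n - length \<alpha>}"
    using card_image[OF inj] card_remaining_columns by (intro card_subset_eq) auto
  with inj show ?thesis unfolding bij_betw_def by simp
qed

abbreviation remaining_squares :: board where
  "remaining_squares \<equiv> {length \<alpha><..n} \<times> ({1..n} - set \<alpha>)"

lemma relabel_bij:
  "bij_betw (relabel \<alpha>) remaining_squares ({1..n - length \<alpha>} \<times> {1..n - length \<alpha>})"
proof -
  have "bij_betw (\<lambda>i. i - length \<alpha>) {length \<alpha><..n} {1..n - length \<alpha>}"
    by (rule bij_betw_byWitness[where f' = "\<lambda>i. i + length \<alpha>"]) auto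
  then show ?thesis unfolding relabel_eq_map_prod by (rule bij_betw_map_prod[OF _ col_rank_bij])
qed

lemma normalize_relabel:
  assumes "X \<subseteq> remaining_squares"
  shows "normalize (relabel \<alpha> ` X) = normalize X"
  unfolding relabel_eq_map_prod
proof (rule normalize_map_prod)
  show "strict_mono_on (fst ` X) (\<lambda>i. i - length \<alpha>)"
    using assms by (force intro: strict_mono_onI)
  show "strict_mono_on (snd ` X) (col_rank \<alpha>)"
    using col_rank_strict_mono[OF zero_notin_prefix] by (rule monotone_on_subset) (use assms in auto)
qed

lemma compl_strip_subset: "P \<subseteq> {1..n} - set \<alpha> \<Longrightarrow> compl_strip n (length \<alpha>) P \<subseteq> remaining_squares"
  unfolding compl_strip_def by auto

lemma sub_board_eq: "P \<subseteq> {1..n} \<Longrightarrow> sub_board n \<alpha> P = relabel \<alpha> ` compl_strip n (length \<alpha>) P"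
  unfolding sub_board_def using menage_board_compl_strip prefix_length(1) by simp

lemma derived_board_compl_eq_Union: "derived_board_compl n \<alpha> = (\<Union>P\<in>runs n \<alpha>. sub_board n \<alpha> P)"
proof -
  let ?M = "menage_board n"
  have inj: "inj_on (relabel \<alpha>) remaining_squares"
    and onto: "relabel \<alpha> ` remaining_squares = {1..n - length \<alpha>} \<times> {1..n - length \<alpha>}"
    using relabel_bij by (simp_all add: bij_betw_def)
  have derived: "derived_board n \<alpha> = relabel \<alpha> ` (remaining_squares \<inter> ?M)"
    unfolding derived_board_def menage_board_def by (rule arg_cong[where f = "image _"]) auto
  have "(\<Union>P\<in>runs n \<alpha>. {(i, j) \<in> menage_board_compl n. length \<alpha> < i \<and> j \<in> P})
      = {(i, j) \<in> menage_board_compl n. length \<alpha> < i \<and> j \<in> \<Union>(runs n \<alpha>)}" by blast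
  also have "\<dots> = remaining_squares - (remaining_squares \<inter> ?M)"
    unfolding Union_runs menage_board_compl_def by auto
  finally have "(\<Union>P\<in>runs n \<alpha>. sub_board n \<alpha> P)
      = relabel \<alpha> ` (remaining_squares - (remaining_squares \<inter> ?M))"
    by (simp add: sub_board_def flip: image_UN)
  also have "\<dots> = relabel \<alpha> ` remaining_squares - relabel \<alpha> ` (remaining_squares \<inter> ?M)"
    using inj by (intro inj_on_image_set_diff) auto
  finally show ?thesis unfolding derived_board_compl_def derived onto by (rule sym)
qed

lemma card_sub_board:
  assumes "P \<subseteq> {1..n} - set \<alpha>"
  shows "card (sub_board n \<alpha> P) = (\<Sum>p\<in>P. cval n (length \<alpha>) p)"
proof -
  have "inj_on (relabel \<alpha>) (compl_strip n (length \<alpha>) P)"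
    using relabel_bij compl_strip_subset[OF assms] unfolding bij_betw_def by (rule inj_on_subset[OF conjunct1])
  moreover have "sub_board n \<alpha> P = relabel \<alpha> ` compl_strip n (length \<alpha>) P"
    using assms by (intro sub_board_eq) auto
  ultimately have "card (sub_board n \<alpha> P) = card (compl_strip n (length \<alpha>) P)"
    by (simp add: card_image)
  also have "\<dots> = (\<Sum>p\<in>P. cval n (length \<alpha>) p)"
    using assms prefix_length(2) by (intro card_compl_strip) auto
  finally show ?thesis .
qed

lemma staircase_shaped_sub_board:
  assumes run: "maximal_run n \<alpha> a b"
  shows "staircase_shaped (sub_board n \<alpha> {a..b})"
proof -
  note l = prefix_length
  have "a \<le> b" "b \<le> n" using run unfolding maximal_run_def by simp_all
  have run_columns: "{a..b} \<subseteq> {1..n} - set \<alpha>" by (rule maximal_run_subset[OF run])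
  then have "sub_board n \<alpha> {a..b} = relabel \<alpha> ` compl_strip n (length \<alpha>) {a..b}"
    by (intro sub_board_eq) auto
  then have shape: "normalize (sub_board n \<alpha> {a..b}) = normalize (compl_strip n (length \<alpha>) {a..b})"
    using normalize_relabel[OF compl_strip_subset[OF run_columns]] by simp
  consider "b < length \<alpha>" | "a \<le> length \<alpha>" "length \<alpha> \<le> b" "b < n" | "a \<le> length \<alpha>" "b = n"
    | "length \<alpha> < a" "b < n" | "length \<alpha> < a" "b = n"
    using \<open>b \<le> n\<close> by linarith
  then have "\<exists>m\<ge>1. normalize (compl_strip n (length \<alpha>) {a..b})
      \<in> {O_shape m, OT_shape m, E_shape m, ET_shape m}"
  proof cases
    case 1
    then show ?thesis
      by (intro exI[of _ 1]) (simp add: compl_strip_empty normalize_def E_shape_def)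
  next
    case 2
    have "normalize (compl_strip n (length \<alpha>) {a..b}) = O_shape (b - length \<alpha> + 1)"
      unfolding compl_strip_O_shape[OF l(1) 2] by (simp add: normalize_shift[OF fst_snd_O_shape])
    then show ?thesis by (intro exI[of _ "b - length \<alpha> + 1"]) simp
  next
    case 3
    have "normalize (compl_strip n (length \<alpha>) {a..b}) = ET_shape (n - length \<alpha> + 1)"
      unfolding 3(2) compl_strip_ET_shape[OF l(1) 3(1)]
      using l(2) by (simp add: normalize_shift[OF fst_snd_ET_shape])
    then show ?thesis by (intro exI[of _ "n - length \<alpha> + 1"]) simp
  next
    case 4
    have "normalize (compl_strip n (length \<alpha>) {a..b}) = E_shape (b - a + 2)"
      unfolding compl_strip_E_shape[OF 4(1) \<open>a \<le> b\<close> 4(2)]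
      by (simp add: normalize_shift[OF fst_snd_E_shape])
    then show ?thesis by (intro exI[of _ "b - a + 2"]) simp
  next
    case 5
    have "normalize (compl_strip n (length \<alpha>) {a..b}) = OT_shape (n - a + 1)"
      unfolding 5(2) compl_strip_OT_shape[OF 5(1) \<open>a \<le> b\<close>[unfolded 5(2)]]
      by (simp add: normalize_shift[OF fst_snd_OT_shape])
    then show ?thesis by (intro exI[of _ "n - a + 1"]) simp
  qed
  then show ?thesis unfolding staircase_shaped_def shape by auto
qed

lemma disjoint_sub_boards_of_gap:
  assumes P: "maximal_run n \<alpha> a b" and Q: "maximal_run n \<alpha> c d"
    and "{a..b} \<noteq> {c..d}" "a \<le> c"
  shows "disjoint_boards (sub_board n \<alpha> {a..b}) (sub_board n \<alpha> {c..d})"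
proof -
  have gap: "b + 2 \<le> c" by (rule maximal_runs_gap[OF assms])
  have cols: "{a..b} \<subseteq> {1..n} - set \<alpha>" "{c..d} \<subseteq> {1..n} - set \<alpha>"
    by (rule maximal_run_subset[OF P], rule maximal_run_subset[OF Q])
  have "sub_board n \<alpha> {a..b} = relabel \<alpha> ` compl_strip n (length \<alpha>) {a..b}"
    using cols(1) by (intro sub_board_eq) auto
  moreover have "sub_board n \<alpha> {c..d} = relabel \<alpha> ` compl_strip n (length \<alpha>) {c..d}"
    using cols(2) by (intro sub_board_eq) auto
  moreover have "fst (relabel \<alpha> x) < fst (relabel \<alpha> y) \<and> snd (relabel \<alpha> x) < snd (relabel \<alpha> y)"
    if "x \<in> compl_strip n (length \<alpha>) {a..b}" "y \<in> compl_strip n (length \<alpha>) {c..d}" for x y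
  proof -
    have "length \<alpha> < fst x" "fst x < fst y" "snd x < snd y" "snd x \<in> - set \<alpha>" "snd y \<in> - set \<alpha>"
      using that gap cols unfolding compl_strip_def by auto
    then show ?thesis
      using strict_mono_onD[OF col_rank_strict_mono[OF zero_notin_prefix]]
      unfolding relabel_eq_map_prod by simp
  qed
  ultimately show ?thesis unfolding disjoint_boards_def by (simp add: less_imp_neq)
qed

lemma disjoint_sub_boards:
  assumes "P \<in> runs n \<alpha>" "Q \<in> runs n \<alpha>" "P \<noteq> Q"
  shows "disjoint_boards (sub_board n \<alpha> P) (sub_board n \<alpha> Q)"
proof -
  obtain a b c d where P: "P = {a..b}" "maximal_run n \<alpha> a b" and Q: "Q = {c..d}" "maximal_run n \<alpha> c d"
    using assms(1,2) unfolding runs_iff by blast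
  show ?thesis
  proof (cases "a \<le> c")
    case True
    then show ?thesis using disjoint_sub_boards_of_gap[OF P(2) Q(2)] assms(3) P Q by simp
  next
    case False
    then have "disjoint_boards (sub_board n \<alpha> Q) (sub_board n \<alpha> P)"
      using disjoint_sub_boards_of_gap[OF Q(2) P(2)] assms(3) P Q by auto
    then show ?thesis by (subst disjoint_boards_commute)
  qed
qed

lemma staircase_shaped_card_sub_board:
  assumes "P \<in> runs n \<alpha>"
  shows "staircase_shaped (sub_board n \<alpha> P) \<and> card (sub_board n \<alpha> P) = (\<Sum>p\<in>P. cval n (length \<alpha>) p)"
proof -
  obtain a b where "P = {a..b}" "maximal_run n \<alpha> a b" using assms unfolding runs_iff by blast
  then show ?thesis using staircase_shaped_sub_board card_sub_board[OF maximal_run_subset] by simp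
qed

end

theorem mainTheorem9:
  fixes n :: nat and \<alpha> :: "nat list"
  assumes "n \<ge> 3" and "valid_prefix n \<alpha>" and "1 \<le> length \<alpha>" and "length \<alpha> < n"
  shows "derived_board_compl n \<alpha> = (\<Union>P\<in>runs n \<alpha>. sub_board n \<alpha> P)
    \<and> (\<forall>P\<in>runs n \<alpha>. \<forall>Q\<in>runs n \<alpha>. P \<noteq> Q \<longrightarrow> disjoint_boards (sub_board n \<alpha> P) (sub_board n \<alpha> Q))
    \<and> (\<forall>P\<in>runs n \<alpha>. staircase_shaped (sub_board n \<alpha> P)
          \<and> card (sub_board n \<alpha> P) = (\<Sum>p\<in>P. cval n (length \<alpha>) p))
    \<and> image_mset (\<lambda>P. card (sub_board n \<alpha> P)) (mset_set (runs n \<alpha>))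
        = image_mset (\<lambda>P. \<Sum>p\<in>P. cval n (length \<alpha>) p) (mset_set (runs n \<alpha>))"
proof -
  interpret prefix_deletion n \<alpha>
    using valid_prefix_distinct_subset[OF assms(2) less_imp_le[OF assms(4)]] assms(3,4)
    by unfold_locales auto
  have shapes: "\<forall>P\<in>runs n \<alpha>. staircase_shaped (sub_board n \<alpha> P)
      \<and> card (sub_board n \<alpha> P) = (\<Sum>p\<in>P. cval n (length \<alpha>) p)"
    using staircase_shaped_card_sub_board by blast
  then have "image_mset (\<lambda>P. card (sub_board n \<alpha> P)) (mset_set (runs n \<alpha>))
      = image_mset (\<lambda>P. \<Sum>p\<in>P. cval n (length \<alpha>) p) (mset_set (runs n \<alpha>))"
    by (intro image_mset_cong) (simp add: finite_runs)
  with shapes show ?thesis using derived_board_compl_eq_Union disjoint_sub_boards by blast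
qed

end
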